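(* Let $G^\sigma$ be an oriented graph whose underlying graph $G$ is a simple connected graph with $n$ vertices and $m$ edges. Then $$\frac{sr(G^\sigma)}{\alpha(G)}\geqslant \frac{4(2n-m-1)}{\sqrt{4n(n-1)-8m+1}+1}-2,$$ with equality if and only if $G\cong S_n$ or $G\cong C_3$.
   Context: An oriented graph $G^\sigma$ is obtained from a simple graph $G$ by assigning a direction to each edge. Its skew-adjacency matrix $S(G^\sigma)=[s_{x,y}]$ has $s_{x,y}=1$ if there is an arc from $x$ to $y$, $s_{x,y}=-1$ if there is an arc from $y$ to $x$, and $0$ otherwise; the skew-rank $sr(G^\sigma)$ is the rank of $S(G^\sigma)$. $\alpha(G)$ is the independence number of $G$. $S_n$ denotes the star on $n$ vertices (the single vertex when $n=1$) and $C_3$ the triangle. *)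

theory Defs
  imports "HOL-Analysis.Analysis"
begin

text \<open>An oriented graph on the finite vertex type 'n is given by its arc set Ar:
  no loops, and at most one direction for each pair of vertices.\<close>
definition oriented :: "('n \<times> 'n) set \<Rightarrow> bool" where
  "oriented Ar \<longleftrightarrow> (\<forall>x. (x, x) \<notin> Ar) \<and> (\<forall>x y. (x, y) \<in> Ar \<longrightarrow> (y, x) \<notin> Ar)"

definition uedges :: "('n \<times> 'n) set \<Rightarrow> 'n set set" where
  "uedges Ar = {{x, y} | x y. (x, y) \<in> Ar}"

definition adj :: "('n \<times> 'n) set \<Rightarrow> 'n \<Rightarrow> 'n \<Rightarrow> bool" where
  "adj Ar x y \<longleftrightarrow> (x, y) \<in> Ar \<or> (y, x) \<in> Ar"

definition connected_graph :: "('n \<times> 'n) set \<Rightarrow> bool" where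
  "connected_graph Ar \<longleftrightarrow> (\<forall>x y. (x, y) \<in> {(u, v). adj Ar u v}\<^sup>*)"

definition skew_adj :: "('n::finite \<times> 'n) set \<Rightarrow> real^'n^'n" where
  "skew_adj Ar = (\<chi> x y. if (x, y) \<in> Ar then 1 else if (y, x) \<in> Ar then -1 else 0)"

definition skew_rank :: "('n::finite \<times> 'n) set \<Rightarrow> nat" where
  "skew_rank Ar = rank (skew_adj Ar)"

definition independent_set :: "('n \<times> 'n) set \<Rightarrow> 'n set \<Rightarrow> bool" where
  "independent_set Ar I \<longleftrightarrow> (\<forall>x\<in>I. \<forall>y\<in>I. \<not> adj Ar x y)"

definition independence_number :: "('n::finite \<times> 'n) set \<Rightarrow> nat" where
  "independence_number Ar = Max {card I | I. independent_set Ar I}"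

definition iso_to :: "('n \<times> 'n) set \<Rightarrow> nat \<Rightarrow> nat set set \<Rightarrow> bool" where
  "iso_to Ar k E \<longleftrightarrow> (\<exists>f. bij_betw f UNIV {0..<k} \<and>
      (\<forall>x y. {x, y} \<in> uedges Ar \<longleftrightarrow> {f x, f y} \<in> E))"

text \<open>Star S_k on vertices {0..<k} with centre 0 (a single vertex when k = 1).\<close>
definition star_edges :: "nat \<Rightarrow> nat set set" where
  "star_edges k = {{0, i} | i. 1 \<le> i \<and> i < k}"

definition triangle_edges :: "nat set set" where
  "triangle_edges = {{0, 1}, {1, 2}, {0, 2}}"

end

theory Submission
  imports Defs
begin

text \<open>The bound rests on two inequalities. The first is sr \<ge> 4n - 2m - 2 alpha - 2c, where the
  number c of components appears as the dimension of the space of vectors that are constant along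
  every arc. It is proved by induction on the number of arcs, deleting vertices but keeping them
  as isolated points: a longest path either starts at a pendant vertex v with neighbour u, and
  deleting u and v lowers the skew-rank by 2, or its first vertex w has two neighbours joined by
  a path avoiding w, and deleting w does not raise the skew-rank and creates at most deg w - 1 new
  components. The second is m + C(alpha, 2) \<le> C(n, 2), because no pair inside an independent
  set is an edge; it says 2 alpha \<le> 1 + sqrt (4n(n - 1) - 8m + 1). For connected graphs the two
  combine to the stated bound. Equality forces both to be tight: then G is the complete graph with
  the edges inside a maximum independent set removed, and the remaining arithmetic leaves only
  the stars and the triangle.\<close>

section \<open>Vertex deletion and the independence number\<close>

definition delete_vertices :: "('n \<times> 'n) set \<Rightarrow> 'n set \<Rightarrow> ('n \<times> 'n) set" where
  "delete_vertices Ar Z = {(a, b) \<in> Ar. a \<notin> Z \<and> b \<notin> Z}"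

definition neighbours :: "('n \<times> 'n) set \<Rightarrow> 'n \<Rightarrow> 'n set" where
  "neighbours Ar p = {y. adj Ar p y}"

lemma adj_commute: "adj Ar x y \<longleftrightarrow> adj Ar y x"
  by (auto simp: adj_def)

lemma oriented_not_adj_self: "oriented Ar \<Longrightarrow> \<not> adj Ar x x"
  by (simp add: oriented_def adj_def)

lemma oriented_delete_vertices: "oriented Ar \<Longrightarrow> oriented (delete_vertices Ar Z)"
  by (auto simp: oriented_def delete_vertices_def)

lemma doubleton_in_uedges_iff: "{x, y} \<in> uedges Ar \<longleftrightarrow> adj Ar x y"
  unfolding uedges_def adj_def by (auto simp: doubleton_eq_iff)

lemma card_uedges:
  assumes "oriented Ar"
  shows "card (uedges Ar) = card Ar"
proof -
  have "uedges Ar = (\<lambda>(a, b). {a, b}) ` Ar"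
    by (auto simp: uedges_def)
  moreover have "inj_on (\<lambda>(a, b). {a, b}) Ar"
  proof (rule inj_onI, clarify)
    fix a b c d assume "(a, b) \<in> Ar" "(c, d) \<in> Ar" "{a, b} = {c, d}"
    then show "a = c \<and> b = d"
      using assms by (auto simp: doubleton_eq_iff oriented_def)
  qed
  ultimately show ?thesis
    by (simp add: card_image)
qed

lemma card_le_independence_number:
  fixes Ar :: "('n::finite \<times> 'n) set"
  assumes "independent_set Ar I"
  shows "card I \<le> independence_number Ar"
proof -
  have "{card I |I. independent_set Ar I} = card ` {I. independent_set Ar I}"
    by auto
  then show ?thesis
    unfolding independence_number_def using assms by (intro Max_ge) auto
qed

lemma independence_number_attained:
  fixes Ar :: "('n::finite \<times> 'n) set"
  obtains I where "independent_set Ar I" "card I = independence_number Ar"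
proof -
  have "{card I |I. independent_set Ar I} = card ` {I. independent_set Ar I}"
    by auto
  moreover have "independent_set Ar {}"
    by (simp add: independent_set_def)
  ultimately have "independence_number Ar \<in> {card I |I. independent_set Ar I}"
    unfolding independence_number_def by (intro Max_in) auto
  then show ?thesis
    using that by auto
qed

lemma independence_number_pos:
  fixes Ar :: "('n::finite \<times> 'n) set"
  assumes "oriented Ar"
  shows "1 \<le> independence_number Ar"
  using card_le_independence_number[of Ar "{undefined}"] assms
  by (simp add: independent_set_def oriented_not_adj_self)

lemma independence_number_le_card: "independence_number (Ar::('n::finite \<times> 'n) set) \<le> CARD('n)"
proof -
  obtain I where "independent_set Ar I" "card I = independence_number Ar"
    by (rule independence_number_attained)
  then show ?thesis
    using card_mono[of UNIV I] by simp
qed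

lemma independence_number_delete_vertices_le:
  fixes Ar :: "('n::finite \<times> 'n) set"
  assumes "\<And>a b. (a, b) \<in> Ar \<Longrightarrow> a \<in> Z \<or> b \<in> Z \<Longrightarrow> a = p \<or> b = p"
  shows "independence_number (delete_vertices Ar Z) \<le> independence_number Ar + 1"
proof -
  obtain I where I: "independent_set (delete_vertices Ar Z) I"
    "card I = independence_number (delete_vertices Ar Z)"
    by (rule independence_number_attained)
  have "independent_set Ar (I - {p})"
    using I(1) assms unfolding independent_set_def adj_def delete_vertices_def by blast
  then have "card (I - {p}) \<le> independence_number Ar"
    by (rule card_le_independence_number)
  moreover have "card I \<le> card (I - {p}) + 1"
    by (cases "p \<in> I") (auto simp: card_Diff1_le)
  ultimately show ?thesis
    using I(2) by simp
qed

lemma card_delete_vertices: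
  fixes Ar :: "('n::finite \<times> 'n) set"
  assumes "oriented Ar" and "p \<in> Z"
    and "\<And>a b. (a, b) \<in> Ar \<Longrightarrow> a \<in> Z \<or> b \<in> Z \<Longrightarrow> a = p \<or> b = p"
  shows "card Ar = card (delete_vertices Ar Z) + card (neighbours Ar p)"
proof -
  let ?T = "{(a, b) \<in> Ar. a = p \<or> b = p}"
  let ?other = "\<lambda>(a, b). if a = p then b else a"
  have "Ar = delete_vertices Ar Z \<union> ?T" and "delete_vertices Ar Z \<inter> ?T = {}"
    using assms(2,3) by (auto simp: delete_vertices_def)
  then have "card Ar = card (delete_vertices Ar Z) + card ?T"
    using card_Un_disjoint[of "delete_vertices Ar Z" ?T] by simp
  moreover have "bij_betw ?other ?T (neighbours Ar p)"
  proof (rule bij_betw_imageI)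
    show "inj_on ?other ?T"
    proof (rule inj_onI)
      fix x y assume "x \<in> ?T" "y \<in> ?T" "?other x = ?other y"
      then show "x = y"
        using assms(1) unfolding oriented_def by (auto split: if_splits)
    qed
    show "?other ` ?T = neighbours Ar p"
    proof (intro equalityI subsetI)
      fix y assume "y \<in> neighbours Ar p"
      then consider "(p, y) \<in> Ar" | "(y, p) \<in> Ar" "y \<noteq> p"
        using assms(1) by (auto simp: neighbours_def adj_def oriented_def)
      then show "y \<in> ?other ` ?T"
      proof cases
        case 1
        then show ?thesis by (force intro: image_eqI[of _ _ "(p, y)"])
      next
        case 2
        then show ?thesis by (force intro: image_eqI[of _ _ "(y, p)"])
      qed
    next
      fix y assume "y \<in> ?other ` ?T"
      then show "y \<in> neighbours Ar p"
        using assms(1) by (auto simp: neighbours_def adj_def oriented_def)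
    qed
  qed
  ultimately show ?thesis
    by (simp add: bij_betw_same_card)
qed

section \<open>The skew-rank under vertex deletion\<close>

lemma skew_adj_empty: "skew_adj {} = 0"
  by (simp add: skew_adj_def vec_eq_iff)

lemma skew_adj_eq_0_if_not_adj: "\<not> adj Ar i j \<Longrightarrow> skew_adj Ar $ i $ j = 0"
  by (simp add: skew_adj_def adj_def)

lemma skew_rank_pos:
  assumes "(a, b) \<in> Ar"
  shows "0 < skew_rank Ar"
proof -
  have "skew_adj Ar \<noteq> 0"
    using assms by (auto simp: skew_adj_def vec_eq_iff)
  then show ?thesis
    unfolding skew_rank_def by (metis gr0I rank_eq_0)
qed

text \<open>Deleting vertices keeps them as isolated vertices, so on the matrix side it zeroes the
  corresponding rows and columns, i.e. it multiplies on both sides by a 0/1 diagonal matrix.\<close>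

definition drop_coords :: "'n set \<Rightarrow> real^'n^'n" where
  "drop_coords Z = (\<chi> i j. if i = j \<and> i \<notin> Z then 1 else 0)"

lemma drop_coords_mult_left: "(drop_coords Z ** M) $ i $ j = (if i \<notin> Z then M $ i $ j else 0)"
proof -
  have "(\<Sum>k\<in>UNIV. drop_coords Z $ i $ k * M $ k $ j)
      = (\<Sum>k\<in>UNIV. if k = i then (if i \<notin> Z then M $ i $ j else 0) else 0)"
    by (rule sum.cong) (auto simp: drop_coords_def)
  then show ?thesis
    by (simp add: matrix_matrix_mult_def)
qed

lemma drop_coords_mult_right: "(M ** drop_coords Z) $ i $ j = (if j \<notin> Z then M $ i $ j else 0)"
proof -
  have "(\<Sum>k\<in>UNIV. M $ i $ k * drop_coords Z $ k $ j)
      = (\<Sum>k\<in>UNIV. if k = j then (if j \<notin> Z then M $ i $ j else 0) else 0)"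
    by (rule sum.cong) (auto simp: drop_coords_def)
  then show ?thesis
    by (simp add: matrix_matrix_mult_def)
qed

lemma skew_adj_delete_vertices_nth:
  "skew_adj (delete_vertices Ar Z) $ i $ j = (if i \<notin> Z \<and> j \<notin> Z then skew_adj Ar $ i $ j else 0)"
  by (simp add: skew_adj_def delete_vertices_def)

lemma skew_adj_delete_vertices:
  "skew_adj (delete_vertices Ar Z) = drop_coords Z ** skew_adj Ar ** drop_coords Z"
  by (simp add: vec_eq_iff drop_coords_mult_left drop_coords_mult_right
      skew_adj_def delete_vertices_def)

lemma skew_rank_delete_vertices_le: "skew_rank (delete_vertices Ar Z) \<le> skew_rank Ar"
  unfolding skew_rank_def skew_adj_delete_vertices
  by (meson le_trans rank_mul_le_left rank_mul_le_right)

lemma dim_add_two_le: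
  fixes R R' :: "(real^'n::finite) set"
  assumes "R' \<subseteq> R" and "a \<in> R" and "b \<in> R"
    and "\<And>w. w \<in> R' \<Longrightarrow> w $ u = 0 \<and> w $ v = 0"
    and "a $ u \<noteq> 0" and "a $ v = 0" and "b $ v \<noteq> 0"
  shows "dim R' + 2 \<le> dim R"
proof -
  have "span R' \<subseteq> {w. w $ u = 0 \<and> w $ v = 0}"
    using assms(4) by (intro span_minimal) (auto simp: subspace_def)
  then have a: "a \<notin> span R'"
    using assms(5) by auto
  have "span (insert a R') \<subseteq> {w. w $ v = 0}"
    using assms(4,6) \<open>span R' \<subseteq> _\<close> span_superset
    by (intro span_minimal) (fastforce simp: subspace_def)+
  then have "b \<notin> span (insert a R')"
    using assms(7) by auto
  then have "dim (insert b (insert a R')) = dim R' + 2"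
    using a by (simp add: dim_insert)
  moreover have "dim (insert b (insert a R')) \<le> dim R"
    using assms(1-3) by (intro dim_subset) auto
  ultimately show ?thesis
    by simp
qed

context
  fixes Ar :: "('n::finite \<times> 'n) set" and u v :: 'n
  assumes oriented: "oriented Ar" and pendant: "neighbours Ar v = {u}"
begin

private lemma adj_pendant_iff: "adj Ar i v \<longleftrightarrow> i = u" "adj Ar v j \<longleftrightarrow> j = u"
  using pendant by (auto simp: neighbours_def adj_def)

private lemma pendant_neq: "u \<noteq> v"
  using adj_pendant_iff oriented_not_adj_self[OF oriented] by metis

private lemma skew_adj_pendant_nonzero: "skew_adj Ar $ u $ v \<noteq> 0"
  using adj_pendant_iff(1)[of u] oriented by (auto simp: skew_adj_def adj_def oriented_def)

private lemma skew_adj_pendant_column: "i \<noteq> u \<Longrightarrow> skew_adj Ar $ i $ v = 0"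
  using skew_adj_eq_0_if_not_adj[of Ar i v] adj_pendant_iff(1)[of i] by auto

private lemma skew_adj_pendant_row: "skew_adj Ar $ v $ j = (if j = u then - skew_adj Ar $ u $ v else 0)"
  using skew_adj_eq_0_if_not_adj[of Ar v j] adj_pendant_iff(2)[of j] oriented
  by (auto simp: skew_adj_def oriented_def)

private lemma skew_adj_mult_axis_pendant:
  "skew_adj Ar *v axis v 1 = skew_adj Ar $ u $ v *\<^sub>R axis u 1"
  unfolding matrix_vector_mult_basis column_def
  by (auto simp: vec_eq_iff skew_adj_pendant_column axis_def)

text \<open>Every vector in the range of the deleted matrix is reached by the full matrix: first kill
  the coordinates u, v of the argument, then correct the u-entry with the column of v.\<close>

private lemma range_delete_pendant_subset:
  "range ((*v) (skew_adj (delete_vertices Ar {u, v}))) \<subseteq> range ((*v) (skew_adj Ar))"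
proof clarify
  fix x
  let ?A = "skew_adj Ar"
  define x0 :: "real^'n" where "x0 = (\<chi> i. if i \<in> {u, v} then 0 else x $ i)"
  define y where "y = ?A *v x0"
  have "y $ v = 0"
    unfolding y_def by (auto simp: matrix_vector_mult_def x0_def skew_adj_pendant_row intro: sum.neutral)
  have "(skew_adj (delete_vertices Ar {u, v}) *v x) $ i = (y - (y $ u) *\<^sub>R axis u 1) $ i" for i
  proof (cases "i \<in> {u, v}")
    case True
    then show ?thesis
      using \<open>y $ v = 0\<close> pendant_neq
      by (auto simp: matrix_vector_mult_def skew_adj_delete_vertices_nth axis_def)
  next
    case False
    then show ?thesis
      by (auto simp: matrix_vector_mult_def skew_adj_delete_vertices_nth y_def x0_def
          axis_def intro!: sum.cong)
  qed
  then have "skew_adj (delete_vertices Ar {u, v}) *v x = y - (y $ u) *\<^sub>R axis u 1"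
    by (simp add: vec_eq_iff)
  also have "\<dots> = ?A *v (x0 - (y $ u / ?A $ u $ v) *\<^sub>R axis v 1)"
    using skew_adj_pendant_nonzero
    by (simp add: matrix_vector_mult_diff_distrib matrix_vector_mult_scaleR
        skew_adj_mult_axis_pendant y_def)
  finally show "skew_adj (delete_vertices Ar {u, v}) *v x \<in> range ((*v) ?A)"
    by (rule range_eqI)
qed

text \<open>Besides the range of the smaller matrix, whose vectors vanish at u and v, the range of the
  full matrix contains its column v, nonzero only at u, and its column u, nonzero at v.\<close>

lemma skew_rank_delete_pendant: "skew_rank (delete_vertices Ar {u, v}) + 2 \<le> skew_rank Ar"
  unfolding skew_rank_def rank_dim_range
proof (rule dim_add_two_le)
  show "range ((*v) (skew_adj (delete_vertices Ar {u, v}))) \<subseteq> range ((*v) (skew_adj Ar))"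
    by (rule range_delete_pendant_subset)
  show "w $ u = 0 \<and> w $ v = 0" if "w \<in> range ((*v) (skew_adj (delete_vertices Ar {u, v})))" for w
    using that by (auto simp: matrix_vector_mult_def skew_adj_delete_vertices_nth)
  show "(skew_adj Ar *v axis v 1) $ u \<noteq> 0" "(skew_adj Ar *v axis v 1) $ v = 0"
    unfolding skew_adj_mult_axis_pendant using skew_adj_pendant_nonzero pendant_neq
    by (simp_all add: axis_def)
  show "(skew_adj Ar *v axis u 1) $ v \<noteq> 0"
    using skew_adj_pendant_nonzero
    by (simp add: matrix_vector_mult_basis column_def skew_adj_pendant_row)
qed auto

end

lemma skew_rank_lt_card_if_odd:
  fixes Ar :: "('n::finite \<times> 'n) set"
  assumes "oriented Ar" and "odd CARD('n)"
  shows "skew_rank Ar < CARD('n)"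
proof -
  define A where "A = skew_adj Ar"
  have "transpose A = (\<chi> i. (-1) *s A $ i)"
    using assms(1) by (auto simp: vec_eq_iff transpose_def A_def skew_adj_def oriented_def)
  then have "det A = (\<Prod>i\<in>(UNIV :: 'n set). -1) * det (\<chi> i. A $ i)"
    using det_rows_mul[of "\<lambda>i. -1" "\<lambda>i. A $ i"] det_transpose[of A] by simp
  also have "\<dots> = - det A"
    using assms(2) by simp
  finally have "det A = 0"
    by simp
  then show ?thesis
    by (simp add: skew_rank_def A_def det_eq_0_rank)
qed

lemma skew_rank_le_two_if_arcs_through:
  fixes Ar :: "('n::finite \<times> 'n) set"
  assumes "oriented Ar" and through: "\<And>x y. adj Ar x y \<Longrightarrow> x = c \<or> y = c"
  shows "skew_rank Ar \<le> 2"
proof -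
  define A where "A = skew_adj Ar"
  have off_centre: "A $ i $ j = 0" if "i \<noteq> c" "j \<noteq> c" for i j
    using through[of i j] that skew_adj_eq_0_if_not_adj[of Ar i j] by (auto simp: A_def)
  have "A $ c $ c = 0"
    using assms(1) by (simp add: A_def skew_adj_def oriented_def)
  have column: "(A *v x) $ i = A $ i $ c * x $ c" if "i \<noteq> c" for x i
  proof -
    have "(A *v x) $ i = (\<Sum>j\<in>UNIV. if j = c then A $ i $ c * x $ c else 0)"
      unfolding matrix_vector_mult_def vec_lambda_beta using that off_centre by (intro sum.cong) auto
    then show ?thesis
      by simp
  qed
  have "range ((*v) A) \<subseteq> span {A *v axis c 1, axis c 1}"
  proof clarify
    fix x
    have "A *v x = (x $ c) *\<^sub>R (A *v axis c 1) + ((A *v x) $ c) *\<^sub>R axis c 1"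
    proof (subst vec_eq_iff, intro allI)
      fix i
      show "(A *v x) $ i = ((x $ c) *\<^sub>R (A *v axis c 1) + ((A *v x) $ c) *\<^sub>R axis c 1) $ i"
        unfolding matrix_vector_mult_basis column_def using column[of i x] \<open>A $ c $ c = 0\<close>
        by (cases "i = c") (simp_all add: axis_def)
    qed
    also have "\<dots> \<in> span {A *v axis c 1, axis c 1}"
      by (intro span_add span_scale span_base) auto
    finally show "A *v x \<in> span {A *v axis c 1, axis c 1}" .
  qed
  then have "dim (range ((*v) A)) \<le> card {A *v axis c 1, axis c 1}"
    by (rule dim_le_card) simp
  also have "\<dots> \<le> 2"
    by (simp add: card_insert_if)
  finally show ?thesis
    by (simp add: skew_rank_def rank_dim_range A_def)
qed

section \<open>Vectors constant along the arcs\<close>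

definition edge_constant :: "('n::finite \<times> 'n) set \<Rightarrow> (real^'n) set" where
  "edge_constant Ar = {x. \<forall>(a, b)\<in>Ar. x $ a = x $ b}"

lemma mem_edge_constant: "x \<in> edge_constant Ar \<longleftrightarrow> (\<forall>a b. (a, b) \<in> Ar \<longrightarrow> x $ a = x $ b)"
  by (auto simp: edge_constant_def)

lemma subspace_edge_constant: "subspace (edge_constant Ar)"
  by (auto simp: subspace_def mem_edge_constant)

lemma edge_constant_empty: "edge_constant {} = UNIV"
  by (simp add: edge_constant_def)

lemma edge_constant_adj: "x \<in> edge_constant Ar \<Longrightarrow> adj Ar a b \<Longrightarrow> x $ a = x $ b"
  by (auto simp: edge_constant_def adj_def)

lemma edge_constant_successively:
  assumes "successively (adj Ar) zs" and "x \<in> edge_constant Ar" and "z \<in> set zs"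
  shows "x $ z = x $ hd zs"
  using assms(1,3)
proof (induction zs rule: induct_list012)
  case (3 z1 z2 zs)
  then show ?case
    using edge_constant_adj[OF assms(2), of z1 z2] by auto
qed simp_all

lemma edge_constant_connected:
  assumes "connected_graph Ar" and "x \<in> edge_constant Ar"
  shows "x $ a = x $ b"
proof -
  have "(a, b) \<in> {(u, v). adj Ar u v}\<^sup>*"
    using assms(1) by (simp add: connected_graph_def)
  then show ?thesis
    by (induction rule: rtrancl_induct) (auto dest: edge_constant_adj[OF assms(2)])
qed

lemma dim_inter_coord_eq_le:
  fixes V :: "(real^'n::finite) set"
  assumes "subspace V"
  shows "dim V \<le> dim (V \<inter> {x. x $ a = x $ b}) + 1"
proof (cases "V \<subseteq> {x. x $ a = x $ b}")
  case True
  then show ?thesis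
    by (simp add: Int_absorb2)
next
  case False
  then obtain z where z: "z \<in> V" "z $ a \<noteq> z $ b"
    by auto
  let ?H = "V \<inter> {x. x $ a = x $ b}"
  have "V \<subseteq> span (insert z ?H)"
  proof
    fix x assume x: "x \<in> V"
    define c where "c = (x $ a - x $ b) / (z $ a - z $ b)"
    have "x - c *\<^sub>R z \<in> ?H"
      using x z assms by (auto simp: c_def field_simps subspace_diff subspace_scale)
    then have "(x - c *\<^sub>R z) + c *\<^sub>R z \<in> span (insert z ?H)"
      by (intro span_add span_scale span_base) auto
    then show "x \<in> span (insert z ?H)"
      by simp
  qed
  then have "dim V \<le> dim (insert z ?H)"
    by (rule dim_mono)
  also have "\<dots> \<le> dim ?H + 1"
    by (simp add: dim_insert)
  finally show ?thesis .
qed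

lemma dim_inter_coords_eq_le:
  fixes V :: "(real^'n::finite) set"
  assumes "subspace V" and "finite Y"
  shows "dim V \<le> dim (V \<inter> {x. \<forall>y\<in>Y. x $ p = x $ y}) + card Y"
  using assms(2)
proof (induction Y rule: finite_induct)
  case empty
  then show ?case by simp
next
  case (insert y Y)
  let ?W = "V \<inter> {x. \<forall>y\<in>Y. x $ p = x $ y}"
  have "subspace ?W"
    using assms(1) by (intro subspace_inter) (auto simp: subspace_def)
  then have "dim ?W \<le> dim (?W \<inter> {x. x $ p = x $ y}) + 1"
    by (rule dim_inter_coord_eq_le)
  moreover have "?W \<inter> {x. x $ p = x $ y} = V \<inter> {x. \<forall>y'\<in>insert y Y. x $ p = x $ y'}"
    by auto
  ultimately show ?case
    using insert by simp
qed

lemma dim_edge_constant_connected: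
  fixes Ar :: "('n::finite \<times> 'n) set"
  assumes "connected_graph Ar"
  shows "dim (edge_constant Ar) \<le> 1"
proof -
  have "edge_constant Ar \<subseteq> span {\<chi> i. 1}"
  proof
    fix x assume "x \<in> edge_constant Ar"
    then have "x = (x $ undefined) *\<^sub>R (\<chi> i. 1)"
      using edge_constant_connected[OF assms] by (simp add: vec_eq_iff)
    then show "x \<in> span {\<chi> i. 1}"
      by (metis span_base span_scale singletonI)
  qed
  then have "dim (edge_constant Ar) \<le> card {(\<chi> i. 1) :: real^'n}"
    by (rule dim_le_card) simp
  then show ?thesis
    by simp
qed

lemma edge_constant_delete_vertices:
  assumes "\<And>a b. (a, b) \<in> Ar \<Longrightarrow> a \<in> Z \<or> b \<in> Z \<Longrightarrow> a = p \<or> b = p"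
  shows "edge_constant Ar
    = edge_constant (delete_vertices Ar Z) \<inter> {x. \<forall>y\<in>neighbours Ar p. x $ p = x $ y}"
  using assms unfolding edge_constant_def delete_vertices_def neighbours_def adj_def by fastforce

lemma edge_constant_delete_joined:
  assumes "y1 \<in> neighbours Ar w" and "y1 \<noteq> y2"
    and "\<forall>x\<in>edge_constant (delete_vertices Ar {w}). x $ y1 = x $ y2"
  shows "edge_constant Ar
    = edge_constant (delete_vertices Ar {w}) \<inter> {x. \<forall>y\<in>neighbours Ar w - {y2}. x $ w = x $ y}"
proof -
  let ?K = "edge_constant (delete_vertices Ar {w})"
  have "?K \<inter> {x. \<forall>y\<in>neighbours Ar w. x $ w = x $ y}
      = ?K \<inter> {x. \<forall>y\<in>neighbours Ar w - {y2}. x $ w = x $ y}" (is "?L = ?R")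
  proof
    show "?R \<subseteq> ?L"
    proof
      fix x assume x: "x \<in> ?R"
      then have "x $ w = x $ y2"
        using assms by auto
      with x show "x \<in> ?L"
        by auto
    qed
  qed auto
  then show ?thesis
    using edge_constant_delete_vertices[of Ar "{w}" w] by auto
qed

text \<open>A longest path v0 v1 ... either starts at a pendant vertex, or v0 has a second neighbour,
  which by maximality lies further along the path; then v1 and that neighbour are joined by a
  path avoiding v0.\<close>

lemma pendant_or_neighbours_joined:
  fixes Ar :: "('n::finite \<times> 'n) set"
  assumes "oriented Ar" and "Ar \<noteq> {}"
  shows "(\<exists>u v. neighbours Ar v = {u}) \<or>
    (\<exists>w y1 y2. y1 \<in> neighbours Ar w \<and> y2 \<in> neighbours Ar w \<and> y1 \<noteq> y2 \<and>
       (\<forall>x\<in>edge_constant (delete_vertices Ar {w}). x $ y1 = x $ y2))"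
proof -
  define paths where "paths = {xs. distinct xs \<and> successively (adj Ar) xs}"
  have "finite paths"
    by (rule finite_subset[OF _ finite_subset_distinct[of UNIV]]) (auto simp: paths_def)
  obtain a b where "(a, b) \<in> Ar"
    using assms(2) by auto
  then have "[a, b] \<in> paths"
    using assms(1) by (auto simp: paths_def adj_def oriented_def)
  then have "Max (length ` paths) \<in> length ` paths"
    using \<open>finite paths\<close> by (intro Max_in) auto
  then obtain xs where xs: "xs \<in> paths" and "length xs = Max (length ` paths)"
    by auto
  then have longest: "length ys \<le> length xs" if "ys \<in> paths" for ys
    using \<open>finite paths\<close> that by simp

  have "2 \<le> length xs"
    using longest[OF \<open>[a, b] \<in> paths\<close>] by simp
  then obtain v0 v1 rest where xs_eq: "xs = v0 # v1 # rest"
    by (metis Suc_le_length_iff numeral_2_eq_2)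
  have v0_v1: "v1 \<in> neighbours Ar v0"
    using xs xs_eq by (simp add: paths_def neighbours_def)
  have on_path: "y \<in> set (v1 # rest)" if "y \<in> neighbours Ar v0" for y
  proof (rule ccontr)
    assume "y \<notin> set (v1 # rest)"
    moreover have "y \<noteq> v0"
      using that assms(1) by (auto simp: neighbours_def oriented_not_adj_self)
    ultimately have "y # xs \<in> paths"
      using xs xs_eq that by (auto simp: paths_def neighbours_def adj_commute)
    then show False
      using longest by fastforce
  qed
  show ?thesis
  proof (cases "neighbours Ar v0 = {v1}")
    case False
    then obtain y where y: "y \<in> neighbours Ar v0" "y \<noteq> v1"
      using v0_v1 by blast
    have "v0 \<notin> set (v1 # rest)" and path: "successively (adj Ar) (v1 # rest)"
      using xs xs_eq by (simp_all add: paths_def)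
    then have "successively (adj (delete_vertices Ar {v0})) (v1 # rest)"
      by (intro successively_mono[OF path]) (auto simp: adj_def delete_vertices_def)
    then have "\<forall>x\<in>edge_constant (delete_vertices Ar {v0}). x $ v1 = x $ y"
      using edge_constant_successively on_path[OF y(1)] by fastforce
    then show ?thesis
      using v0_v1 y by blast
  qed blast
qed

section \<open>The lower bound for the skew-rank\<close>

text \<open>Deleting Z raises alpha by at most 1, removes deg p arcs and raises the dimension of the
  edge constant space by at most card Y, so the bound survives if the skew-rank drops enough.\<close>

lemma skew_rank_lower_bound_step:
  fixes Ar :: "('n::finite \<times> 'n) set"
  assumes "oriented Ar" and "p \<in> Z"
    and through: "\<And>a b. (a, b) \<in> Ar \<Longrightarrow> a \<in> Z \<or> b \<in> Z \<Longrightarrow> a = p \<or> b = p"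
    and smaller: "4 * CARD('n) \<le> skew_rank (delete_vertices Ar Z)
      + 2 * independence_number (delete_vertices Ar Z) + 2 * card (delete_vertices Ar Z)
      + 2 * dim (edge_constant (delete_vertices Ar Z))"
    and edge_constant_eq:
      "edge_constant Ar = edge_constant (delete_vertices Ar Z) \<inter> {x. \<forall>y\<in>Y. x $ p = x $ y}"
    and rank_drop:
      "skew_rank (delete_vertices Ar Z) + 2 + 2 * card Y \<le> skew_rank Ar + 2 * card (neighbours Ar p)"
  shows "4 * CARD('n) \<le> skew_rank Ar + 2 * independence_number Ar + 2 * card Ar
    + 2 * dim (edge_constant Ar)"
proof -
  have "dim (edge_constant (delete_vertices Ar Z)) \<le> dim (edge_constant Ar) + card Y"
    using dim_inter_coords_eq_le[OF subspace_edge_constant, of Y "delete_vertices Ar Z" p]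
    by (simp add: edge_constant_eq)
  moreover have "independence_number (delete_vertices Ar Z) \<le> independence_number Ar + 1"
    using through by (rule independence_number_delete_vertices_le)
  moreover have "card Ar = card (delete_vertices Ar Z) + card (neighbours Ar p)"
    using assms(1,2) through by (rule card_delete_vertices)
  ultimately show ?thesis
    using smaller rank_drop by linarith
qed

text \<open>The space edge_constant Ar has one dimension per connected component, so this is
  sr \<ge> 4n - 2m - 2 alpha - 2c.\<close>

lemma skew_rank_lower_bound:
  fixes Ar :: "('n::finite \<times> 'n) set"
  assumes "oriented Ar"
  shows "4 * CARD('n) \<le> skew_rank Ar + 2 * independence_number Ar + 2 * card Ar
    + 2 * dim (edge_constant Ar)"
  using assms
proof (induction "card Ar" arbitrary: Ar rule: less_induct)
  case less
  note oriented = less.prems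
  have smaller: "4 * CARD('n) \<le> skew_rank (delete_vertices Ar Z)
      + 2 * independence_number (delete_vertices Ar Z) + 2 * card (delete_vertices Ar Z)
      + 2 * dim (edge_constant (delete_vertices Ar Z))"
    if "card (delete_vertices Ar Z) < card Ar" for Z
    using less.hyps[OF that] oriented_delete_vertices[OF oriented] by blast
  show ?case
  proof (cases "Ar = {}")
    case True
    have "independent_set Ar UNIV"
      using True by (simp add: independent_set_def adj_def)
    then have "CARD('n) \<le> independence_number Ar"
      by (rule card_le_independence_number)
    then show ?thesis
      using True by (simp add: edge_constant_empty)
  next
    case False
    then consider (pendant) u v where "neighbours Ar v = {u}"
      | (joined) w y1 y2 where "y1 \<in> neighbours Ar w" "y2 \<in> neighbours Ar w" "y1 \<noteq> y2"
          "\<forall>x\<in>edge_constant (delete_vertices Ar {w}). x $ y1 = x $ y2"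
      using pendant_or_neighbours_joined[OF oriented] by blast
    then show ?thesis
    proof cases
      case pendant
      have through: "a = u \<or> b = u" if "(a, b) \<in> Ar" "a \<in> {u, v} \<or> b \<in> {u, v}" for a b
        using that pendant by (auto simp: neighbours_def adj_def)
      have "v \<in> neighbours Ar u"
        using pendant by (auto simp: neighbours_def adj_commute)
      then have "0 < card (neighbours Ar u)"
        by (auto simp: card_gt_0_iff)
      then have "card (delete_vertices Ar {u, v}) < card Ar"
        using card_delete_vertices[of Ar u "{u, v}", OF oriented _ through] by simp
      then show ?thesis
        using skew_rank_delete_pendant[OF oriented pendant]
        by (intro skew_rank_lower_bound_step[OF oriented _ through smaller
              edge_constant_delete_vertices[of Ar "{u, v}" u, OF through]]) auto
    next
      case joined
      have through: "a = w \<or> b = w" if "(a, b) \<in> Ar" "a \<in> {w} \<or> b \<in> {w}" for a b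
        using that by auto
      have "{y1, y2} \<subseteq> neighbours Ar w"
        using joined by auto
      then have "2 \<le> card (neighbours Ar w)"
        using card_mono[of "neighbours Ar w" "{y1, y2}"] joined(3) by simp
      then have "card (delete_vertices Ar {w}) < card Ar"
        using card_delete_vertices[of Ar w "{w}", OF oriented _ through] by simp
      moreover have "edge_constant Ar = edge_constant (delete_vertices Ar {w})
          \<inter> {x. \<forall>y\<in>neighbours Ar w - {y2}. x $ w = x $ y}"
        using joined by (intro edge_constant_delete_joined)
      moreover have "card (neighbours Ar w - {y2}) + 1 = card (neighbours Ar w)"
        using joined(2) \<open>2 \<le> _\<close> by simp
      ultimately show ?thesis
        using skew_rank_delete_vertices_le[of Ar "{w}"]
        by (intro skew_rank_lower_bound_step[OF oriented _ through smaller]) auto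
    qed
  qed
qed

section \<open>Edges versus independent sets\<close>

lemma two_mul_choose_two: "2 * (k choose 2) = k * (k - 1)"
proof (induction k)
  case (Suc k)
  have "Suc k choose 2 = k + (k choose 2)"
    by (simp add: numeral_2_eq_2)
  then show ?case
    using Suc by (cases k) (auto simp: algebra_simps)
qed simp

text \<open>No pair inside an independent set I is an edge, so m + C(alpha, 2) \<le> C(n, 2);
  equality means that every other pair is an edge.\<close>

lemma card_uedges_independent_le:
  fixes Ar :: "('n::finite \<times> 'n) set"
  assumes "oriented Ar" and "independent_set Ar I"
  shows "2 * card (uedges Ar) + card I * (card I - 1) \<le> CARD('n) * (CARD('n) - 1)"
    and "2 * card (uedges Ar) + card I * (card I - 1) = CARD('n) * (CARD('n) - 1) \<Longrightarrow>
         adj Ar x y \<longleftrightarrow> x \<noteq> y \<and> \<not> (x \<in> I \<and> y \<in> I)"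
proof -
  define pairs where "pairs S = {e. e \<subseteq> S \<and> card e = 2}" for S :: "'n set"
  have card_pairs: "2 * card (pairs S) = card S * (card S - 1)" for S
    using n_subsets[of S 2] two_mul_choose_two by (simp add: pairs_def)
  have subset: "uedges Ar \<subseteq> pairs UNIV - pairs I"
  proof
    fix e assume "e \<in> uedges Ar"
    then obtain a b where e: "e = {a, b}" "(a, b) \<in> Ar"
      by (auto simp: uedges_def)
    then have "a \<noteq> b" and "\<not> (a \<in> I \<and> b \<in> I)"
      using assms by (auto simp: oriented_def independent_set_def adj_def)
    then show "e \<in> pairs UNIV - pairs I"
      using e(1) by (auto simp: pairs_def)
  qed
  have "pairs I \<subseteq> pairs UNIV"
    by (auto simp: pairs_def)
  then have card_diff: "2 * card (pairs UNIV - pairs I) + card I * (card I - 1) = CARD('n) * (CARD('n) - 1)"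
    using card_pairs[of I] card_pairs[of UNIV] card_mono[of "pairs UNIV" "pairs I"]
    by (simp add: card_Diff_subset)
  moreover have "card (uedges Ar) \<le> card (pairs UNIV - pairs I)"
    using subset by (simp add: card_mono)
  ultimately show "2 * card (uedges Ar) + card I * (card I - 1) \<le> CARD('n) * (CARD('n) - 1)"
    by linarith
  assume "2 * card (uedges Ar) + card I * (card I - 1) = CARD('n) * (CARD('n) - 1)"
  then have "uedges Ar = pairs UNIV - pairs I"
    using subset card_diff by (intro card_subset_eq) auto
  then have "adj Ar x y \<longleftrightarrow> {x, y} \<in> pairs UNIV - pairs I"
    using doubleton_in_uedges_iff[of x y Ar] by simp
  then show "adj Ar x y \<longleftrightarrow> x \<noteq> y \<and> \<not> (x \<in> I \<and> y \<in> I)"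
    by (cases "x = y") (auto simp: pairs_def)
qed

definition skew_bound :: "real \<Rightarrow> real \<Rightarrow> real" where
  "skew_bound n m = 4 * (2 * n - m - 1) / (sqrt (4 * n * (n - 1) - 8 * m + 1) + 1) - 2"

text \<open>With s = sqrt(4n(n - 1) - 8m + 1), the first hypothesis says alpha \<le> (s + 1)/2 and the
  second gives sr/alpha \<ge> 2(2n - m - 1)/alpha - 2; combining them yields the bound, and
  equality in the bound forces equality in both.\<close>

lemma skew_bound_le_ratio:
  fixes n m a r :: real
  assumes "1 \<le> a" and "0 \<le> r"
    and independent: "2 * m + a * (a - 1) \<le> n * (n - 1)"
    and rank: "4 * n \<le> r + 2 * a + 2 * m + 2"
  shows "skew_bound n m \<le> r / a"
    and "r / a = skew_bound n m \<Longrightarrow> 2 * m + a * (a - 1) = n * (n - 1) \<and> 4 * n = r + 2 * a + 2 * m + 2"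
proof -
  define s where "s = sqrt (4 * n * (n - 1) - 8 * m + 1)"
  define A where "A = 2 * n - m - 1"
  have bound_eq: "skew_bound n m = 4 * A / (s + 1) - 2"
    by (simp add: skew_bound_def s_def A_def)
  have radicand: "(2 * a - 1)\<^sup>2 \<le> 4 * n * (n - 1) - 8 * m + 1"
    using independent by (simp add: power2_eq_square algebra_simps)
  then have s: "2 * a - 1 \<le> s"
    unfolding s_def by (rule real_le_rsqrt)
  have "(2 * A - 2 * a) / a \<le> r / a"
    using rank \<open>1 \<le> a\<close> by (intro divide_right_mono) (auto simp: A_def)
  moreover have "(2 * A - 2 * a) / a = 2 * A / a - 2"
    using \<open>1 \<le> a\<close> by (simp add: field_simps)
  ultimately have rank': "2 * A / a - 2 \<le> r / a"
    by simp
  have "0 < s + 1"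
    using s \<open>1 \<le> a\<close> by linarith
  have nonpos: "4 * A / (s + 1) - 2 < r / a" if "A \<le> 0"
  proof -
    have "4 * A / (s + 1) \<le> 0"
      using that \<open>0 < s + 1\<close> by (simp add: divide_nonpos_pos)
    moreover have "0 \<le> r / a"
      using \<open>0 \<le> r\<close> \<open>1 \<le> a\<close> by simp
    ultimately show ?thesis
      by linarith
  qed
  have pos: "4 * A / (s + 1) \<le> 2 * A / a" if "0 < A"
    using that s \<open>1 \<le> a\<close> \<open>0 < s + 1\<close> by (simp add: divide_simps)
  show "skew_bound n m \<le> r / a"
    using nonpos pos rank' by (cases "A \<le> 0") (auto simp: bound_eq)
  assume "r / a = skew_bound n m"
  then have "0 < A" and "r / a = 2 * A / a - 2" and "4 * A / (s + 1) = 2 * A / a"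
    using nonpos pos rank' by (force simp: bound_eq)+
  then have "r = 2 * A - 2 * a" and "A * (s + 1 - 2 * a) = 0"
    using \<open>1 \<le> a\<close> \<open>0 < s + 1\<close> by (auto simp: field_simps)
  then have "r = 2 * A - 2 * a" and "s = 2 * a - 1"
    using \<open>0 < A\<close> by auto
  moreover have "s\<^sup>2 = 4 * n * (n - 1) - 8 * m + 1"
    unfolding s_def using radicand by (intro real_sqrt_pow2) (smt (verit) zero_le_power2)
  ultimately have "(2 * a - 1)\<^sup>2 = 4 * n * (n - 1) - 8 * m + 1" and "r = 2 * A - 2 * a"
    by simp_all
  then show "2 * m + a * (a - 1) = n * (n - 1) \<and> 4 * n = r + 2 * a + 2 * m + 2"
    by (simp add: A_def power2_eq_square algebra_simps)
qed

lemma skew_ratio_ge_skew_bound: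
  fixes Ar :: "('n::finite \<times> 'n) set"
  assumes "oriented Ar" and "connected_graph Ar"
  defines "N \<equiv> CARD('n)" and "M \<equiv> card (uedges Ar)"
    and "r \<equiv> skew_rank Ar" and "\<alpha> \<equiv> independence_number Ar"
  shows "skew_bound N M \<le> real r / real \<alpha>"
    and "real r / real \<alpha> = skew_bound N M \<Longrightarrow>
      2 * M + \<alpha> * (\<alpha> - 1) = N * (N - 1) \<and> 4 * N = r + 2 * \<alpha> + 2 * M + 2"
proof -
  have "1 \<le> \<alpha>"
    using independence_number_pos[OF assms(1)] by (simp add: \<alpha>_def)
  have "1 \<le> N"
    by (simp add: N_def Suc_le_eq)
  obtain I where I: "independent_set Ar I" "card I = \<alpha>"
    unfolding \<alpha>_def by (rule independence_number_attained)
  then have "2 * M + \<alpha> * (\<alpha> - 1) \<le> N * (N - 1)"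
    using card_uedges_independent_le(1)[OF assms(1) I(1)] by (simp add: M_def N_def)
  then have "real (2 * M + \<alpha> * (\<alpha> - 1)) \<le> real (N * (N - 1))"
    by (simp only: of_nat_le_iff)
  then have independent: "2 * real M + real \<alpha> * (real \<alpha> - 1) \<le> real N * (real N - 1)"
    using \<open>1 \<le> \<alpha>\<close> \<open>1 \<le> N\<close> by (simp add: of_nat_diff)
  have "4 * N \<le> r + 2 * \<alpha> + 2 * M + 2"
    using skew_rank_lower_bound[OF assms(1)] dim_edge_constant_connected[OF assms(2)]
      card_uedges[OF assms(1)]
    unfolding N_def M_def r_def \<alpha>_def by linarith
  then have rank: "4 * real N \<le> real r + 2 * real \<alpha> + 2 * real M + 2"
    by linarith
  note bound = skew_bound_le_ratio[OF _ _ independent rank]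
  then show "skew_bound N M \<le> real r / real \<alpha>"
    using \<open>1 \<le> \<alpha>\<close> by simp
  assume "real r / real \<alpha> = skew_bound N M"
  then have "2 * real M + real \<alpha> * (real \<alpha> - 1) = real N * (real N - 1)"
    and "4 * real N = real r + 2 * real \<alpha> + 2 * real M + 2"
    using bound(2) \<open>1 \<le> \<alpha>\<close> by simp_all
  then have "real (2 * M + \<alpha> * (\<alpha> - 1)) = real (N * (N - 1))"
    and "real (4 * N) = real (r + 2 * \<alpha> + 2 * M + 2)"
    using \<open>1 \<le> \<alpha>\<close> \<open>1 \<le> N\<close> by (simp_all add: of_nat_diff)
  then show "2 * M + \<alpha> * (\<alpha> - 1) = N * (N - 1) \<and> 4 * N = r + 2 * \<alpha> + 2 * M + 2"
    by (simp only: of_nat_eq_iff)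
qed

section \<open>Stars and the triangle\<close>

definition star_centred :: "('n \<times> 'n) set \<Rightarrow> 'n \<Rightarrow> bool" where
  "star_centred Ar c \<longleftrightarrow> (\<forall>x y. adj Ar x y \<longleftrightarrow> x \<noteq> y \<and> (x = c \<or> y = c))"

definition complete_graph :: "('n \<times> 'n) set \<Rightarrow> bool" where
  "complete_graph Ar \<longleftrightarrow> (\<forall>x y. adj Ar x y \<longleftrightarrow> x \<noteq> y)"

lemma eq_if_CARD_eq_1:
  assumes "CARD('n) = 1"
  shows "(x :: 'n) = y"
proof -
  obtain z :: 'n where "UNIV = {z}"
    using assms by (rule card_1_singletonE)
  then have "x \<in> {z}" and "y \<in> {z}"
    by (metis UNIV_I)+
  then show ?thesis
    by simp
qed

lemma obtain_bij_betw_atLeast0LessThan: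
  assumes "finite A" and "c \<in> A" and "i < card A"
  obtains f where "bij_betw f A {0..<card A}" and "f c = i"
proof -
  obtain g where g: "bij_betw g A {0..<card A}"
    using ex_bij_betw_finite_nat[OF assms(1)] by blast
  then have "g c < card A"
    using assms(2) by (auto simp: bij_betw_def)
  then have "bij_betw (Transposition.transpose (g c) i \<circ> g) A {0..<card A}"
    using g assms(3) by (auto intro: bij_betw_trans)
  then show ?thesis
    using that by simp
qed

lemma doubleton_in_star_edges_iff:
  "{a, b} \<in> star_edges k \<longleftrightarrow> (a = 0 \<and> 1 \<le> b \<and> b < k) \<or> (b = 0 \<and> 1 \<le> a \<and> a < k)"
  unfolding star_edges_def by (auto simp: doubleton_eq_iff)

lemma doubleton_in_triangle_edges_iff: "{a, b} \<in> triangle_edges \<longleftrightarrow> a \<noteq> b \<and> a < 3 \<and> b < 3"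
  unfolding triangle_edges_def
  by (auto simp: doubleton_eq_iff numeral_3_eq_3 less_Suc_eq)

lemma star_edges_image_iff:
  fixes Ar :: "('n::finite \<times> 'n) set"
  assumes "bij_betw f UNIV {0..<CARD('n)}" and "f c = 0"
  shows "(\<forall>x y. {x, y} \<in> uedges Ar \<longleftrightarrow> {f x, f y} \<in> star_edges CARD('n)) \<longleftrightarrow> star_centred Ar c"
proof -
  have zero: "f x = 0 \<longleftrightarrow> x = c" and bounded: "f x < CARD('n)" for x
    using assms by (metis bij_betw_def injD, metis bij_betwE UNIV_I atLeastLessThan_iff)
  have "(f x = 0 \<and> 1 \<le> f y \<and> f y < CARD('n)) \<or> (f y = 0 \<and> 1 \<le> f x \<and> f x < CARD('n))
      \<longleftrightarrow> x \<noteq> y \<and> (x = c \<or> y = c)" for x y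
    using zero[of x] zero[of y] bounded[of x] bounded[of y] by auto
  then show ?thesis
    unfolding star_centred_def doubleton_in_uedges_iff doubleton_in_star_edges_iff by simp
qed

lemma iso_to_star_iff:
  fixes Ar :: "('n::finite \<times> 'n) set"
  shows "iso_to Ar CARD('n) (star_edges CARD('n)) \<longleftrightarrow> (\<exists>c. star_centred Ar c)"
proof
  assume "iso_to Ar CARD('n) (star_edges CARD('n))"
  then obtain f where f: "bij_betw f UNIV {0..<CARD('n)}"
    and edges: "\<forall>x y. {x, y} \<in> uedges Ar \<longleftrightarrow> {f x, f y} \<in> star_edges CARD('n)"
    by (auto simp: iso_to_def)
  moreover obtain c where "f c = 0"
    using f by (metis bij_betw_iff_bijections atLeastLessThan_iff finite_UNIV_card_ge_0 finite le0)
  ultimately show "\<exists>c. star_centred Ar c"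
    using star_edges_image_iff by blast
next
  assume "\<exists>c. star_centred Ar c"
  then obtain c where "star_centred Ar c" ..
  moreover obtain f where "bij_betw f UNIV {0..<CARD('n)}" and "f c = 0"
    by (rule obtain_bij_betw_atLeast0LessThan[of UNIV c 0]) auto
  ultimately show "iso_to Ar CARD('n) (star_edges CARD('n))"
    unfolding iso_to_def using star_edges_image_iff by blast
qed

lemma iso_to_triangle_iff:
  fixes Ar :: "('n::finite \<times> 'n) set"
  shows "iso_to Ar 3 triangle_edges \<longleftrightarrow> CARD('n) = 3 \<and> complete_graph Ar"
proof -
  have complete_iff: "complete_graph Ar \<longleftrightarrow> (\<forall>x y. {x, y} \<in> uedges Ar \<longleftrightarrow> {f x, f y} \<in> triangle_edges)"
    if f: "bij_betw f UNIV {0..<3}" for f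
  proof -
    have "f x < 3" for x
      using f by (metis bij_betwE UNIV_I atLeastLessThan_iff)
    then show ?thesis
      using f unfolding complete_graph_def doubleton_in_uedges_iff doubleton_in_triangle_edges_iff
      by (auto simp: bij_betw_def inj_eq)
  qed
  show ?thesis
  proof
    assume "iso_to Ar 3 triangle_edges"
    then obtain f where "bij_betw f UNIV {0..<3}"
      and "\<forall>x y. {x, y} \<in> uedges Ar \<longleftrightarrow> {f x, f y} \<in> triangle_edges"
      by (auto simp: iso_to_def)
    then show "CARD('n) = 3 \<and> complete_graph Ar"
      using complete_iff bij_betw_same_card by fastforce
  next
    assume *: "CARD('n) = 3 \<and> complete_graph Ar"
    then obtain f where "bij_betw f (UNIV :: 'n set) {0..<3 :: nat}"
      using ex_bij_betw_finite_nat[of "UNIV :: 'n set"] by auto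
    then show "iso_to Ar 3 triangle_edges"
      using * complete_iff unfolding iso_to_def by blast
  qed
qed

lemma tight_bound_solutions:
  fixes a t r M :: nat
  assumes "1 \<le> a" and "2 \<le> t" and "1 \<le> r"
    and "2 * M + a * (a - 1) = (a + t) * (a + t - 1)"
    and "4 * (a + t) = r + 2 * a + 2 * M + 2"
  shows "t = 2 \<and> a = 1"
proof -
  have "2 * int M + int a * (int a - 1) = (int a + int t) * (int a + int t - 1)"
    using arg_cong[OF assms(4), of int] assms(1) by (simp add: of_nat_diff)
  moreover have "4 * (int a + int t) = int r + 2 * int a + 2 * int M + 2"
    using arg_cong[OF assms(5), of int] by simp
  ultimately have r_eq: "int r = 5 * int t - 2 - 2 * int a * (int t - 1) - int t * int t"
    by algebra
  have "int t - 1 \<le> int a * (int t - 1)"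
    using mult_right_mono[of 1 "int a" "int t - 1"] assms(1,2) by simp
  moreover have "3 \<le> int t \<Longrightarrow> 3 * int t \<le> int t * int t"
    using mult_right_mono[of 3 "int t" "int t"] by simp
  ultimately have "t = 2"
    using r_eq assms(2,3) by linarith
  then show ?thesis
    using r_eq assms(1,3) by simp
qed

lemma triangle_if_tight_bounds:
  fixes Ar :: "('n::finite \<times> 'n) set"
  assumes "independent_set Ar I" and "card I = independence_number Ar"
    and adj_iff: "\<And>x y. adj Ar x y \<longleftrightarrow> x \<noteq> y \<and> \<not> (x \<in> I \<and> y \<in> I)"
    and independent: "2 * card (uedges Ar) + independence_number Ar * (independence_number Ar - 1)
      = CARD('n) * (CARD('n) - 1)"
    and rank: "4 * CARD('n)
      = skew_rank Ar + 2 * independence_number Ar + 2 * card (uedges Ar) + 2"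
    and "1 \<le> independence_number Ar" and two: "2 \<le> card (UNIV - I)"
  shows "CARD('n) = 3 \<and> complete_graph Ar"
proof -
  have "\<not> card (UNIV - I) \<le> Suc 0"
    using two by simp
  then obtain y1 y2 where "y1 \<notin> I" "y2 \<notin> I" "y1 \<noteq> y2"
    using card_le_Suc0_iff_eq[of "UNIV - I"] by auto
  then have "adj Ar y1 y2"
    using adj_iff by simp
  then have "1 \<le> skew_rank Ar"
    using skew_rank_pos by (force simp: adj_def)
  moreover have "card (UNIV - I) = CARD('n) - independence_number Ar"
    using assms(2) by (simp add: card_Diff_subset)
  ultimately have "CARD('n) - independence_number Ar = 2 \<and> independence_number Ar = 1"
    using two independent rank \<open>1 \<le> independence_number Ar\<close> independence_number_le_card[of Ar]
    by (intro tight_bound_solutions) auto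
  moreover obtain c where "I = {c}"
    using assms(2) calculation card_1_singletonE by metis
  ultimately show ?thesis
    using adj_iff by (auto simp: complete_graph_def)
qed

lemma tight_bounds_imp_star_or_triangle:
  fixes Ar :: "('n::finite \<times> 'n) set"
  assumes oriented: "oriented Ar"
    and independent: "2 * card (uedges Ar) + independence_number Ar * (independence_number Ar - 1)
      = CARD('n) * (CARD('n) - 1)"
    and rank: "4 * CARD('n)
      = skew_rank Ar + 2 * independence_number Ar + 2 * card (uedges Ar) + 2"
  shows "(\<exists>c. star_centred Ar c) \<or> CARD('n) = 3 \<and> complete_graph Ar"
proof -
  obtain I where I: "independent_set Ar I" "card I = independence_number Ar"
    by (rule independence_number_attained)
  have adj_iff: "adj Ar x y \<longleftrightarrow> x \<noteq> y \<and> \<not> (x \<in> I \<and> y \<in> I)" for x y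
    using card_uedges_independent_le(2)[OF oriented I(1)] independent I(2) by simp
  consider (empty) "UNIV - I = {}" | (single) c where "UNIV - I = {c}" | (two) "2 \<le> card (UNIV - I)"
  proof -
    have "card (UNIV - I) = 0 \<or> card (UNIV - I) = Suc 0 \<or> 2 \<le> card (UNIV - I)"
      by linarith
    then show ?thesis
      using that by (auto simp: card_1_singleton_iff)
  qed
  then show ?thesis
  proof cases
    case empty
    then have "I = UNIV"
      by blast
    then have "Ar = {}"
      using adj_iff by (auto simp: adj_def)
    moreover have "independence_number Ar = CARD('n)"
      using \<open>I = UNIV\<close> I(2) by simp
    ultimately have "CARD('n) = 1"
      using rank by (simp add: skew_rank_def skew_adj_empty uedges_def)
    then have "x = y" for x y :: 'n
      by (rule eq_if_CARD_eq_1)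
    then show ?thesis
      using \<open>Ar = {}\<close> by (auto simp: star_centred_def adj_def)
  next
    case single
    then have "star_centred Ar c"
      using adj_iff by (auto simp: star_centred_def)
    then show ?thesis
      by blast
  next
    case two
    then show ?thesis
      using triangle_if_tight_bounds[OF I adj_iff independent rank] independence_number_pos[OF oriented]
      by blast
  qed
qed

lemma card_uedges_star:
  fixes Ar :: "('n::finite \<times> 'n) set"
  assumes "star_centred Ar c"
  shows "card (uedges Ar) = CARD('n) - 1"
proof -
  have "uedges Ar = (\<lambda>x. {c, x}) ` (UNIV - {c})"
  proof (intro equalityI subsetI)
    fix e assume "e \<in> uedges Ar"
    then obtain a b where "e = {a, b}" "adj Ar a b"
      by (auto simp: uedges_def adj_def)
    then show "e \<in> (\<lambda>x. {c, x}) ` (UNIV - {c})"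
      using assms by (auto simp: star_centred_def insert_commute)
  qed (use assms in \<open>auto simp: star_centred_def doubleton_in_uedges_iff\<close>)
  moreover have "inj_on (\<lambda>x. {c, x}) (UNIV - {c})"
    by (auto simp: inj_on_def doubleton_eq_iff)
  ultimately show ?thesis
    by (simp add: card_image card_Diff_singleton)
qed

lemma card_uedges_complete:
  fixes Ar :: "('n::finite \<times> 'n) set"
  assumes "complete_graph Ar"
  shows "card (uedges Ar) = CARD('n) choose 2"
proof -
  have "e \<in> uedges Ar \<longleftrightarrow> card e = 2" for e
  proof
    assume "e \<in> uedges Ar"
    then obtain a b where "e = {a, b}" and "adj Ar a b"
      by (auto simp: uedges_def adj_def)
    moreover have "a \<noteq> b"
      using assms \<open>adj Ar a b\<close> by (simp add: complete_graph_def)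
    ultimately show "card e = 2"
      by simp
  next
    assume "card e = 2"
    then obtain x y where "e = {x, y}" "x \<noteq> y"
      by (auto simp: card_2_iff)
    then show "e \<in> uedges Ar"
      using assms by (simp add: complete_graph_def doubleton_in_uedges_iff)
  qed
  then have "uedges Ar = {e. e \<subseteq> UNIV \<and> card e = 2}"
    by blast
  then show ?thesis
    using n_subsets[of "UNIV :: 'n set" 2] by simp
qed

lemma skew_bound_star:
  assumes "2 \<le> n"
  shows "skew_bound n (n - 1) = 2 / (n - 1)"
proof -
  have "sqrt (4 * n * (n - 1) - 8 * (n - 1) + 1) = 2 * n - 3"
    using assms by (intro real_sqrt_unique) (auto simp: power2_eq_square algebra_simps)
  then have "skew_bound n (n - 1) = 4 * n / (2 * n - 2) - 2"
    unfolding skew_bound_def by (simp add: algebra_simps)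
  also have "\<dots> = 2 / (n - 1)"
    using assms by (simp add: field_simps)
  finally show ?thesis .
qed

lemma skew_ratio_star_le:
  fixes Ar :: "('n::finite \<times> 'n) set"
  assumes "oriented Ar" and star: "star_centred Ar c"
  shows "real (skew_rank Ar) / real (independence_number Ar)
    \<le> skew_bound (CARD('n)) (card (uedges Ar))"
proof (cases "CARD('n) = 1")
  case True
  then have "x = y" for x y :: 'n
    by (rule eq_if_CARD_eq_1)
  then have "Ar = {}"
    using star by (auto simp: star_centred_def adj_def)
  then show ?thesis
    using True card_uedges_star[OF star] by (simp add: skew_rank_def skew_adj_empty skew_bound_def)
next
  case False
  moreover have "0 < CARD('n)"
    by simp
  ultimately have "2 \<le> CARD('n)"
    by linarith
  have "independent_set Ar (UNIV - {c})"
    using star by (auto simp: independent_set_def star_centred_def)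
  then have "real CARD('n) - 1 \<le> real (independence_number Ar)"
    using card_le_independence_number by (fastforce simp: card_Diff_singleton)
  moreover have "skew_rank Ar \<le> 2"
    using star by (intro skew_rank_le_two_if_arcs_through[OF assms(1)]) (auto simp: star_centred_def)
  ultimately have "real (skew_rank Ar) / real (independence_number Ar) \<le> 2 / (real CARD('n) - 1)"
    using \<open>2 \<le> CARD('n)\<close> by (intro frac_le) auto
  then show ?thesis
    using \<open>2 \<le> CARD('n)\<close> card_uedges_star[OF star] skew_bound_star[of "real CARD('n)"]
    by (simp add: of_nat_diff)
qed

lemma skew_ratio_triangle_le:
  fixes Ar :: "('n::finite \<times> 'n) set"
  assumes "oriented Ar" and "CARD('n) = 3" and "complete_graph Ar"
  shows "real (skew_rank Ar) / real (independence_number Ar)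
    \<le> skew_bound (CARD('n)) (card (uedges Ar))"
proof -
  have "skew_rank Ar \<le> 2"
    using skew_rank_lt_card_if_odd[OF assms(1)] assms(2) by simp
  moreover have "1 \<le> independence_number Ar"
    using assms(1) by (rule independence_number_pos)
  ultimately have "real (skew_rank Ar) / real (independence_number Ar) \<le> 2"
    by (simp add: divide_le_eq)
  moreover have "card (uedges Ar) = 3"
    using assms(2) card_uedges_complete[OF assms(3)] by (simp add: choose_two)
  then have "skew_bound (CARD('n)) (card (uedges Ar)) = 2"
    using assms(2) by (simp add: skew_bound_def)
  ultimately show ?thesis
    by simp
qed

theorem theorem1p6:
  fixes Ar :: "('n::finite \<times> 'n) set"
  assumes "oriented Ar" and "connected_graph Ar"
  defines "n \<equiv> real CARD('n)" and "m \<equiv> real (card (uedges Ar))"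
  shows "real (skew_rank Ar) / real (independence_number Ar)
           \<ge> 4 * (2 * n - m - 1) / (sqrt (4 * n * (n - 1) - 8 * m + 1) + 1) - 2 \<and>
         (real (skew_rank Ar) / real (independence_number Ar)
           = 4 * (2 * n - m - 1) / (sqrt (4 * n * (n - 1) - 8 * m + 1) + 1) - 2
         \<longleftrightarrow> iso_to Ar CARD('n) (star_edges CARD('n)) \<or> iso_to Ar 3 triangle_edges)"
proof -
  let ?ratio = "real (skew_rank Ar) / real (independence_number Ar)"
  have bound: "4 * (2 * n - m - 1) / (sqrt (4 * n * (n - 1) - 8 * m + 1) + 1) - 2
      = skew_bound (CARD('n)) (card (uedges Ar))"
    by (simp add: skew_bound_def n_def m_def)
  note ge = skew_ratio_ge_skew_bound[OF assms(1,2)]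
  have "?ratio = skew_bound (CARD('n)) (card (uedges Ar))
      \<longleftrightarrow> (\<exists>c. star_centred Ar c) \<or> CARD('n) = 3 \<and> complete_graph Ar"
  proof
    assume "?ratio = skew_bound (CARD('n)) (card (uedges Ar))"
    then show "(\<exists>c. star_centred Ar c) \<or> CARD('n) = 3 \<and> complete_graph Ar"
      using ge(2) tight_bounds_imp_star_or_triangle[OF assms(1)] by simp
  next
    assume "(\<exists>c. star_centred Ar c) \<or> CARD('n) = 3 \<and> complete_graph Ar"
    then have "?ratio \<le> skew_bound (CARD('n)) (card (uedges Ar))"
      using skew_ratio_star_le[OF assms(1)] skew_ratio_triangle_le[OF assms(1)] by blast
    then show "?ratio = skew_bound (CARD('n)) (card (uedges Ar))"
      using ge(1) by simp
  qed
  then show ?thesis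
    unfolding bound iso_to_star_iff iso_to_triangle_iff using ge(1) by simp
qed

end
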